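(* There exists $\lambda_0\ge 0$ such that for every $\lambda\ge\lambda_0$, the cross-group ordering $o=O(n^a,n^b)$ output by the xOrder procedure with parameter $\lambda$ satisfies $$\Delta\mathrm{xAUC}^o\le\max\left(\frac{1}{n_1^a},\frac{1}{n_1^b}\right).$$
   Context: Setting: two disjoint finite groups $a,b$ of instances with labels $Y_u\in\{0,1\}$; $n^g,n^g_1,n^g_0$ denote the size, number of positives and number of negatives of group $g$ (all counts $\ge1$); $n_1=n_1^a+n_1^b$, $n_0=n_0^a+n_0^b$, $k_{a,b}=n_1^an_0^b$, $k_{b,a}=n_0^an_1^b$, $k=n_0n_1$. $\mathrm{p}^a=(\mathrm{p}^{a(1)},\dots,\mathrm{p}^{a(n^a)})$ and $\mathrm{p}^b=(\mathrm{p}^{b(1)},\dots,\mathrm{p}^{b(n^b)})$ are fixed orderings of the groups. A cross-group ordering is a list of all instances of $a\cup b$ preserving the relative orders within $\mathrm{p}^a$ and within $\mathrm{p}^b$; "precedes" means ranked higher. $\mathrm{xAUC}^o(a,b)=\frac{1}{n_1^an_0^b}\#\{(u,v):u\in a,Y_u=1,v\in b,Y_v=0,u\text{ precedes }v\text{ in }o\}$, $\mathrm{xAUC}^o(b,a)$ symmetrically; $\Delta\mathrm{xAUC}^o=|\mathrm{xAUC}^o(a,b)-\mathrm{xAUC}^o(b,a)|$. xOrder: For $0\le i\le n^a$, $0\le j\le n^b$ and a list $q$ interleaving $\mathrm{p}^{a(1)},\dots,\mathrm{p}^{a(i)}$ and $\mathrm{p}^{b(1)},\dots,\mathrm{p}^{b(j)}$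 with within-group orders preserved, let $q^{\to b}$ be $q$ followed by $\mathrm{p}^{b(j+1)},\dots,\mathrm{p}^{b(n^b)}$ and $q^{\to a}$ be $q$ followed by $\mathrm{p}^{a(i+1)},\dots,\mathrm{p}^{a(n^a)}$. Define $A(q)=\frac{1}{n_1^an_0^b}\#\{(u,v): u\in\{\mathrm{p}^{a(1)},..,\mathrm{p}^{a(i)}\},Y_u=1,v\in b,Y_v=0,u\text{ precedes }v\text{ in }q^{\to b}\}$, $B(q)=\frac{1}{n_1^bn_0^a}\#\{(u,v): u\in\{\mathrm{p}^{b(1)},..,\mathrm{p}^{b(j)}\},Y_u=1,v\in a,Y_v=0,u\text{ precedes }v\text{ in }q^{\to a}\}$, and $\widehat G(q)=\frac{k_{a,b}}{k}A(q)+\frac{k_{b,a}}{k}B(q)-\lambda|A(q)-B(q)|$. Set $O(i,0)=(\mathrm{p}^{a(1)},\dots,\mathrm{p}^{a(i)})$, $O(0,j)=(\mathrm{p}^{b(1)},\dots,\mathrm{p}^{b(j)})$. For $i=1,\dots,n^a$, $j=1,\dots,n^b$ (in increasing order): if $\widehat G(O(i-1,j)\oplus\mathrm{p}^{a(i)})>\widehat G(O(i,j-1)\oplus\mathrm{p}^{b(j)})$ then $O(i,j)=O(i-1,j)\oplus\mathrm{p}^{a(i)}$, otherwise $O(i,j)=O(i,j-1)\oplus\mathrm{p}^{b(j)}$ ($\oplus$ appends an element to the end of a list). The output is $O(n^a,n^b)$. *)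

theory Defs
  imports Complex_Main
begin

(* Model: group a has n^a = length la instances, identified with their positions in the
   fixed ordering p^a; Inl i stands for p^{a(i+1)} (0-based), with label la ! i.
   Likewise Inr j stands for p^{b(j+1)} with label lb ! j.
   A (partial) cross-group ordering is a list of such elements, earlier = ranked higher. *)

type_synonym item = "nat + nat"

definition precedes :: "item \<Rightarrow> item \<Rightarrow> item list \<Rightarrow> bool" where
  "precedes x y xs \<longleftrightarrow> (\<exists>k l. k < l \<and> l < length xs \<and> xs ! k = x \<and> xs ! l = y)"

definition npos :: "bool list \<Rightarrow> nat" where
  "npos l = length (filter (\<lambda>y. y) l)"

definition nneg :: "bool list \<Rightarrow> nat" where
  "nneg l = length (filter Not l)"

definition xAUC_ab :: "bool list \<Rightarrow> bool list \<Rightarrow> item list \<Rightarrow> real" where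
  "xAUC_ab la lb ord = real (card {(u, v). u < length la \<and> la ! u \<and> v < length lb \<and> \<not> lb ! v
        \<and> precedes (Inl u) (Inr v) ord}) / (real (npos la) * real (nneg lb))"

definition xAUC_ba :: "bool list \<Rightarrow> bool list \<Rightarrow> item list \<Rightarrow> real" where
  "xAUC_ba la lb ord = real (card {(u, v). u < length lb \<and> lb ! u \<and> v < length la \<and> \<not> la ! v
        \<and> precedes (Inr u) (Inl v) ord}) / (real (npos lb) * real (nneg la))"

definition delta_xAUC :: "bool list \<Rightarrow> bool list \<Rightarrow> item list \<Rightarrow> real" where
  "delta_xAUC la lb ord = \<bar>xAUC_ab la lb ord - xAUC_ba la lb ord\<bar>"

definition cnt_a :: "item list \<Rightarrow> nat" where "cnt_a q = length (filter isl q)"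
definition cnt_b :: "item list \<Rightarrow> nat" where "cnt_b q = length (filter (\<lambda>x. \<not> isl x) q)"

definition ext_b :: "bool list \<Rightarrow> item list \<Rightarrow> item list" where
  "ext_b lb q = q @ map Inr [cnt_b q..<length lb]"
definition ext_a :: "bool list \<Rightarrow> item list \<Rightarrow> item list" where
  "ext_a la q = q @ map Inl [cnt_a q..<length la]"

definition A_part :: "bool list \<Rightarrow> bool list \<Rightarrow> item list \<Rightarrow> real" where
  "A_part la lb q = real (card {(u, v). u < cnt_a q \<and> la ! u \<and> v < length lb \<and> \<not> lb ! v
        \<and> precedes (Inl u) (Inr v) (ext_b lb q)}) / (real (npos la) * real (nneg lb))"

definition B_part :: "bool list \<Rightarrow> bool list \<Rightarrow> item list \<Rightarrow> real" where
  "B_part la lb q = real (card {(u, v). u < cnt_b q \<and> lb ! u \<and> v < length la \<and> \<not> la ! v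
        \<and> precedes (Inr u) (Inl v) (ext_a la q)}) / (real (npos lb) * real (nneg la))"

definition G_hat :: "bool list \<Rightarrow> bool list \<Rightarrow> real \<Rightarrow> item list \<Rightarrow> real" where
  "G_hat la lb lam q =
     (let k = real (npos la + npos lb) * real (nneg la + nneg lb);
          kab = real (npos la) * real (nneg lb);
          kba = real (nneg la) * real (npos lb)
      in kab / k * A_part la lb q + kba / k * B_part la lb q
         - lam * \<bar>A_part la lb q - B_part la lb q\<bar>)"

fun xO :: "bool list \<Rightarrow> bool list \<Rightarrow> real \<Rightarrow> nat \<Rightarrow> nat \<Rightarrow> item list" where
  "xO la lb lam 0 j = map Inr [0..<j]"
| "xO la lb lam (Suc i) 0 = map Inl [0..<Suc i]"
| "xO la lb lam (Suc i) (Suc j) =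
     (if G_hat la lb lam (xO la lb lam i (Suc j) @ [Inl i])
         > G_hat la lb lam (xO la lb lam (Suc i) j @ [Inr j])
      then xO la lb lam i (Suc j) @ [Inl i]
      else xO la lb lam (Suc i) j @ [Inr j])"

definition xOrder :: "bool list \<Rightarrow> bool list \<Rightarrow> real \<Rightarrow> item list" where
  "xOrder la lb lam = xO la lb lam (length la) (length lb)"

end

theory Submission
  imports Defs
begin

text \<open>
  Let \<open>d(i,j) = A(O(i,j)) - B(O(i,j))\<close> and \<open>M = max(1/n\<^sub>1\<^sup>a, 1/n\<^sub>1\<^sup>b)\<close>. Appending the next
  \<open>a\<close>-item raises \<open>d\<close> by at most \<open>1/n\<^sub>1\<^sup>a\<close>, appending the next \<open>b\<close>-item lowers it by at
  most \<open>1/n\<^sub>1\<^sup>b\<close>, and once one group is used up, appending items of the other changes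
  nothing. The weighted accuracy part of \<open>G\<close> lies in \<open>[0,1]\<close> while \<open>N d\<close> is an integer for
  \<open>N = n\<^sub>1\<^sup>a n\<^sub>0\<^sup>b n\<^sub>1\<^sup>b n\<^sub>0\<^sup>a\<close>, so for \<open>\<lambda> > N\<close> every greedy step picks the candidate of
  smaller \<open>|d|\<close>. On such a greedy grid no cell \<open>(i,j)\<close> has \<open>d(i+1,j) > M\<close> and
  \<open>d(i,j+1) < -M\<close>; along the last row and column this traps \<open>d(n\<^sup>a,n\<^sup>b)\<close> in \<open>[-M, M]\<close>.
\<close>

lemma precedes_Nil [simp]: "\<not> precedes x y []"
  by (simp add: precedes_def)

lemma precedes_Cons:
  "precedes x y (z # xs) \<longleftrightarrow> (z = x \<and> y \<in> set xs) \<or> precedes x y xs"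
proof
  assume "precedes x y (z # xs)"
  then obtain k l where kl: "k < l" "l < Suc (length xs)" "(z # xs) ! k = x" "(z # xs) ! l = y"
    by (auto simp: precedes_def)
  then obtain l' where l': "l = Suc l'" by (cases l) auto
  show "(z = x \<and> y \<in> set xs) \<or> precedes x y xs"
  proof (cases k)
    case 0
    then show ?thesis using kl l' by auto
  next
    case (Suc k')
    then show ?thesis using kl l' unfolding precedes_def by auto
  qed
next
  assume "(z = x \<and> y \<in> set xs) \<or> precedes x y xs"
  then show "precedes x y (z # xs)"
  proof
    assume "z = x \<and> y \<in> set xs"
    then show ?thesis
      unfolding precedes_def in_set_conv_nth by (force intro: exI[of _ 0])
  next
    assume "precedes x y xs"
    then show ?thesis
      unfolding precedes_def by (force intro: exI[of _ "Suc _"])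
  qed
qed

lemma precedes_append:
  "precedes x y (xs @ ys) \<longleftrightarrow> precedes x y xs \<or> (x \<in> set xs \<and> y \<in> set ys) \<or> precedes x y ys"
  by (induction xs) (auto simp: precedes_Cons)

lemma precedes_setD: "precedes x y xs \<Longrightarrow> x \<in> set xs \<and> y \<in> set xs"
  by (auto simp: precedes_def)

lemma precedes_map_inj:
  assumes "inj f"
  shows "precedes (f x) (f y) (map f xs) \<longleftrightarrow> precedes x y xs"
proof -
  have "map f xs ! k = f z \<longleftrightarrow> xs ! k = z" if "k < length xs" for k z
    using that assms by (simp add: inj_eq)
  then show ?thesis
    unfolding precedes_def by (metis length_map less_trans)
qed

definition positives :: "bool list \<Rightarrow> nat set" where
  "positives l = {u. u < length l \<and> l ! u}"

definition negatives :: "bool list \<Rightarrow> nat set" where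
  "negatives l = {v. v < length l \<and> \<not> l ! v}"

lemma card_positives: "card (positives l) = npos l"
  by (simp add: positives_def npos_def length_filter_conv_card)

lemma card_negatives: "card (negatives l) = nneg l"
  by (simp add: negatives_def nneg_def length_filter_conv_card)

definition well_indexed :: "item list \<Rightarrow> bool" where
  "well_indexed q \<longleftrightarrow> (\<forall>u. Inl u \<in> set q \<longrightarrow> u < cnt_a q) \<and> (\<forall>v. Inr v \<in> set q \<longrightarrow> v < cnt_b q)"

lemma cnt_append_Inl [simp]: "cnt_a (q @ [Inl u]) = Suc (cnt_a q)" "cnt_b (q @ [Inl u]) = cnt_b q"
  by (simp_all add: cnt_a_def cnt_b_def)

lemma cnt_append_Inr [simp]: "cnt_a (q @ [Inr v]) = cnt_a q" "cnt_b (q @ [Inr v]) = Suc (cnt_b q)"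
  by (simp_all add: cnt_a_def cnt_b_def)

lemma well_indexed_append_Inl: "well_indexed q \<Longrightarrow> well_indexed (q @ [Inl (cnt_a q)])"
  by (auto simp: well_indexed_def)

lemma well_indexed_append_Inr: "well_indexed q \<Longrightarrow> well_indexed (q @ [Inr (cnt_b q)])"
  by (auto simp: well_indexed_def)

lemma well_indexed_next_notin:
  "well_indexed q \<Longrightarrow> Inl (cnt_a q) \<notin> set q" "well_indexed q \<Longrightarrow> Inr (cnt_b q) \<notin> set q"
  by (auto simp: well_indexed_def)

lemma xO_0: "xO la lb lam i 0 = map Inl [0..<i]"
  by (cases i) simp_all

lemma xO_invariants:
  "cnt_a (xO la lb lam i j) = i \<and> cnt_b (xO la lb lam i j) = j \<and> well_indexed (xO la lb lam i j)"
proof (induction la lb lam i j rule: xO.induct)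
  case (3 la lb lam i j)
  then show ?case
    using well_indexed_append_Inl[of "xO la lb lam i (Suc j)"]
      well_indexed_append_Inr[of "xO la lb lam (Suc i) j"] by auto
qed (auto simp: cnt_a_def cnt_b_def well_indexed_def filter_map comp_def simp del: upt_Suc)

definition A_pairs :: "bool list \<Rightarrow> bool list \<Rightarrow> item list \<Rightarrow> (nat \<times> nat) set" where
  "A_pairs la lb q = {(u, v). u < cnt_a q \<and> la ! u \<and> v \<in> negatives lb
        \<and> precedes (Inl u) (Inr v) (ext_b lb q)}"

lemma A_part_eq_card: "A_part la lb q = card (A_pairs la lb q) / (npos la * nneg lb)"
  by (simp add: A_part_def A_pairs_def negatives_def)

lemma finite_A_pairs: "finite (A_pairs la lb q)"
  by (rule finite_subset[of _ "{..<cnt_a q} \<times> negatives lb"])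
    (auto simp: A_pairs_def negatives_def)

lemma card_A_pairs_le: "cnt_a q \<le> length la \<Longrightarrow> card (A_pairs la lb q) \<le> npos la * nneg lb"
  unfolding card_positives[symmetric] card_negatives[symmetric] card_cartesian_product[symmetric]
  by (rule card_mono) (auto simp: A_pairs_def positives_def negatives_def)

lemma A_part_nonneg: "0 \<le> A_part la lb q"
  by (simp add: A_part_def)

lemma A_part_le_one: "cnt_a q \<le> length la \<Longrightarrow> A_part la lb q \<le> 1"
  using card_A_pairs_le[of q la lb]
  by (simp add: A_part_eq_card divide_le_eq of_nat_mult[symmetric] del: of_nat_mult)

lemma A_part_Nil [simp]: "A_part la lb [] = 0"
  by (simp add: A_part_def cnt_a_def)

lemma A_pairs_append_next_Inr:
  "cnt_b q < length lb \<Longrightarrow> A_pairs la lb (q @ [Inr (cnt_b q)]) = A_pairs la lb q"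
  by (simp add: A_pairs_def ext_b_def upt_conv_Cons)

lemma A_pairs_append_next_Inl:
  "A_pairs la lb q \<subseteq> A_pairs la lb (q @ [Inl (cnt_a q)])"
  "A_pairs la lb (q @ [Inl (cnt_a q)]) \<subseteq> A_pairs la lb q \<union> {cnt_a q} \<times> negatives lb"
  by (auto simp: A_pairs_def ext_b_def precedes_append precedes_Cons less_Suc_eq)

lemma A_pairs_append_last_Inl:
  "well_indexed q \<Longrightarrow> cnt_b q = length lb \<Longrightarrow> A_pairs la lb (q @ [Inl (cnt_a q)]) = A_pairs la lb q"
  by (auto simp: A_pairs_def ext_b_def precedes_append precedes_Cons less_Suc_eq negatives_def
      dest: well_indexed_next_notin precedes_setD)

lemma A_part_append_next_Inr:
  "cnt_b q < length lb \<Longrightarrow> A_part la lb (q @ [Inr (cnt_b q)]) = A_part la lb q"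
  by (simp add: A_part_eq_card A_pairs_append_next_Inr)

lemma A_part_append_last_Inl:
  "well_indexed q \<Longrightarrow> cnt_b q = length lb \<Longrightarrow> A_part la lb (q @ [Inl (cnt_a q)]) = A_part la lb q"
  by (simp add: A_part_eq_card A_pairs_append_last_Inl)

lemma A_part_append_next_Inl:
  "A_part la lb q \<le> A_part la lb (q @ [Inl (cnt_a q)])"
  "A_part la lb (q @ [Inl (cnt_a q)]) \<le> A_part la lb q + 1 / npos la"
proof -
  let ?old = "card (A_pairs la lb q)" and ?new = "card (A_pairs la lb (q @ [Inl (cnt_a q)]))"
  have "?old \<le> ?new"
    by (rule card_mono[OF finite_A_pairs A_pairs_append_next_Inl(1)])
  then show "A_part la lb q \<le> A_part la lb (q @ [Inl (cnt_a q)])"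
    by (simp add: A_part_eq_card divide_right_mono)
  have "?new \<le> card (A_pairs la lb q \<union> {cnt_a q} \<times> negatives lb)"
    by (rule card_mono[OF _ A_pairs_append_next_Inl(2)]) (simp add: finite_A_pairs negatives_def)
  also have "\<dots> \<le> ?old + nneg lb"
    using card_Un_le[of "A_pairs la lb q" "{cnt_a q} \<times> negatives lb"]
    by (simp add: card_cartesian_product card_negatives)
  finally have "A_part la lb (q @ [Inl (cnt_a q)]) \<le> (?old + nneg lb) / (npos la * nneg lb)"
    unfolding A_part_eq_card by (intro divide_right_mono) simp_all
  also have "\<dots> = A_part la lb q + nneg lb / (npos la * nneg lb)"
    by (simp add: A_part_eq_card add_divide_distrib)
  also have "nneg lb / (npos la * nneg lb) \<le> 1 / npos la"
    by (cases "nneg lb = 0") simp_all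
  finally show "A_part la lb (q @ [Inl (cnt_a q)]) \<le> A_part la lb q + 1 / npos la"
    by simp
qed

definition swap_item :: "item \<Rightarrow> item" where
  "swap_item = case_sum Inr Inl"

lemma swap_item_simps [simp]: "swap_item (Inl u) = Inr u" "swap_item (Inr v) = Inl v"
  by (simp_all add: swap_item_def)

lemma swap_item_swap_item [simp]: "swap_item (swap_item x) = x"
  by (cases x) simp_all

lemma inj_swap_item: "inj swap_item"
  by (rule injI) (auto simp: swap_item_def split: sum.splits)

lemma cnt_map_swap_item [simp]:
  "cnt_a (map swap_item q) = cnt_b q" "cnt_b (map swap_item q) = cnt_a q"
  by (induction q) (auto simp: cnt_a_def cnt_b_def swap_item_def split: sum.splits)

lemma B_part_eq_A_part_swap: "B_part la lb q = A_part lb la (map swap_item q)"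
proof -
  have "ext_b la (map swap_item q) = map swap_item (ext_a la q)"
    by (simp add: ext_a_def ext_b_def)
  moreover have "precedes (Inl u) (Inr v) (map swap_item xs) \<longleftrightarrow> precedes (Inr u) (Inl v) xs"
    for u v xs
    using precedes_map_inj[OF inj_swap_item, of "Inr u" "Inl v"] by simp
  ultimately show ?thesis
    by (simp add: A_part_def B_part_def mult.commute)
qed

lemma in_set_map_swap_item: "x \<in> set (map swap_item q) \<longleftrightarrow> swap_item x \<in> set q"
  by (metis imageE image_eqI list.set_map swap_item_swap_item)

lemma well_indexed_map_swap_item: "well_indexed q \<Longrightarrow> well_indexed (map swap_item q)"
  unfolding well_indexed_def in_set_map_swap_item by simp

lemma map_swap_item_append_Inr:
  "map swap_item (q @ [Inr (cnt_b q)]) = map swap_item q @ [Inl (cnt_a (map swap_item q))]"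
  by simp

lemma B_part_nonneg: "0 \<le> B_part la lb q"
  by (simp add: B_part_def)

lemma B_part_le_one: "cnt_b q \<le> length lb \<Longrightarrow> B_part la lb q \<le> 1"
  by (simp add: B_part_eq_A_part_swap A_part_le_one)

lemma B_part_Nil [simp]: "B_part la lb [] = 0"
  by (simp add: B_part_eq_A_part_swap)

lemma B_part_append_next_Inl:
  "cnt_a q < length la \<Longrightarrow> B_part la lb (q @ [Inl (cnt_a q)]) = B_part la lb q"
  using A_part_append_next_Inr[of "map swap_item q" la lb]
  by (simp add: B_part_eq_A_part_swap)

lemma B_part_append_last_Inr:
  "well_indexed q \<Longrightarrow> cnt_a q = length la \<Longrightarrow> B_part la lb (q @ [Inr (cnt_b q)]) = B_part la lb q"
  using A_part_append_last_Inl[OF well_indexed_map_swap_item, of q la lb]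
  by (simp add: B_part_eq_A_part_swap)

lemma B_part_append_next_Inr:
  "B_part la lb q \<le> B_part la lb (q @ [Inr (cnt_b q)])"
  "B_part la lb (q @ [Inr (cnt_b q)]) \<le> B_part la lb q + 1 / npos lb"
  unfolding B_part_eq_A_part_swap map_swap_item_append_Inr
  by (rule A_part_append_next_Inl)+

definition xgap :: "bool list \<Rightarrow> bool list \<Rightarrow> item list \<Rightarrow> real" where
  "xgap la lb q = A_part la lb q - B_part la lb q"

lemma delta_xAUC_eq_abs_xgap:
  "cnt_a q = length la \<Longrightarrow> cnt_b q = length lb \<Longrightarrow> delta_xAUC la lb q = \<bar>xgap la lb q\<bar>"
  by (simp add: delta_xAUC_def xAUC_ab_def xAUC_ba_def xgap_def A_part_def B_part_def ext_a_def ext_b_def)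

lemma xgap_scaled_in_Ints:
  "real (npos la * nneg lb * npos lb * nneg la) * xgap la lb q \<in> \<int>"
proof (cases "npos la * nneg lb = 0 \<or> npos lb * nneg la = 0")
  case True
  then show ?thesis by auto
next
  case False
  then have "real (npos la * nneg lb * npos lb * nneg la) * xgap la lb q
      = real (card (A_pairs la lb q) * (npos lb * nneg la))
        - real (card (A_pairs lb la (map swap_item q)) * (npos la * nneg lb))"
    by (simp add: xgap_def B_part_eq_A_part_swap A_part_eq_card field_simps)
  then show ?thesis
    by (metis Ints_diff Ints_of_nat)
qed

lemma G_hat_eq_penalized_xgap:
  assumes "cnt_a q \<le> length la" "cnt_b q \<le> length lb"
  shows "\<exists>c. 0 \<le> c \<and> c \<le> 1 \<and> G_hat la lb lam q = c - lam * \<bar>xgap la lb q\<bar>"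
proof -
  define k where "k = real (npos la + npos lb) * real (nneg la + nneg lb)"
  define w1 where "w1 = real (npos la) * real (nneg lb) / k"
  define w2 where "w2 = real (nneg la) * real (npos lb) / k"
  have "real (npos la) * real (nneg lb) + real (nneg la) * real (npos lb) \<le> k"
    by (simp add: k_def algebra_simps)
  moreover have "0 \<le> k"
    by (simp add: k_def)
  ultimately have "w1 + w2 \<le> 1"
    by (cases "k = 0") (simp_all add: w1_def w2_def add_divide_distrib[symmetric] divide_le_eq_1)
  moreover have "0 \<le> w1" "0 \<le> w2"
    by (simp_all add: w1_def w2_def k_def)
  moreover have "A_part la lb q \<in> {0..1}" "B_part la lb q \<in> {0..1}"
    using assms by (simp_all add: A_part_nonneg A_part_le_one B_part_nonneg B_part_le_one)
  ultimately have "0 \<le> w1 * A_part la lb q + w2 * B_part la lb q"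
      "w1 * A_part la lb q + w2 * B_part la lb q \<le> 1"
    by (auto intro: order.trans[OF add_mono[OF mult_left_le mult_left_le]])
  moreover have "G_hat la lb lam q = w1 * A_part la lb q + w2 * B_part la lb q - lam * \<bar>xgap la lb q\<bar>"
    by (simp add: G_hat_def xgap_def w1_def w2_def k_def Let_def)
  ultimately show ?thesis
    by blast
qed

lemma abs_le_if_penalized_ge:
  fixes x y c d N lam :: real
  assumes "c \<in> {0..1}" "d \<in> {0..1}" "N * x \<in> \<int>" "N * y \<in> \<int>" "0 < N" "N < lam"
    and "c - lam * \<bar>x\<bar> \<ge> d - lam * \<bar>y\<bar>"
  shows "\<bar>x\<bar> \<le> \<bar>y\<bar>"
proof (rule ccontr)
  assume "\<not> \<bar>x\<bar> \<le> \<bar>y\<bar>"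
  then have pos: "0 < \<bar>x\<bar> - \<bar>y\<bar>" by simp
  have "\<bar>N * x\<bar> - \<bar>N * y\<bar> \<in> \<int>"
    using assms(3,4) by (simp add: Ints_abs Ints_diff)
  moreover have "\<bar>N * x\<bar> - \<bar>N * y\<bar> = N * (\<bar>x\<bar> - \<bar>y\<bar>)"
    using assms(5) by (simp add: abs_mult right_diff_distrib)
  ultimately have "1 \<le> N * (\<bar>x\<bar> - \<bar>y\<bar>)"
    using pos assms(5) by (metis Ints_nonzero_abs_ge1 abs_of_pos less_irrefl mult_pos_pos)
  also have "\<dots> < lam * (\<bar>x\<bar> - \<bar>y\<bar>)"
    using pos assms(6) by (simp add: mult_strict_right_mono)
  finally show False
    using assms(1,2,7) by (simp add: algebra_simps)
qed

lemma no_opposite_excess_step: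
  fixes x p p' q q' a a' b b' M :: real
  assumes "0 \<le> a" "a \<le> M" "0 \<le> b" "b \<le> M" "0 \<le> a'" "0 \<le> b'"
    and p: "p = x + a \<or> (p = p' - b' \<and> \<bar>p\<bar> \<le> \<bar>x + a\<bar> \<and> \<not> (M < p' \<and> x < - M))"
    and q: "q = x - b \<or> (q = q' + a' \<and> \<bar>q\<bar> \<le> \<bar>x - b\<bar> \<and> \<not> (M < x \<and> q' < - M))"
  shows "\<not> (M < p \<and> q < - M)"
  using assms by linarith

locale greedy_grid =
  fixes d \<alpha> \<beta> :: "nat \<Rightarrow> nat \<Rightarrow> real" and M :: real and na nb :: nat
  assumes \<alpha>_bounds: "0 \<le> \<alpha> i j" "\<alpha> i j \<le> M"
    and \<beta>_bounds: "0 \<le> \<beta> i j" "\<beta> i j \<le> M"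
    and \<alpha>_last_column: "\<alpha> i nb = 0"
    and \<beta>_last_row: "\<beta> na j = 0"
    and grid_nonempty: "0 < na" "0 < nb"
    and d_origin: "d 0 0 = 0"
    and d_first_column: "i < na \<Longrightarrow> d (Suc i) 0 = d i 0 + \<alpha> i 0"
    and d_first_row: "j < nb \<Longrightarrow> d 0 (Suc j) = d 0 j - \<beta> 0 j"
    and d_greedy: "i < na \<Longrightarrow> j < nb \<Longrightarrow>
      (d (Suc i) (Suc j) = d i (Suc j) + \<alpha> i (Suc j) \<or> d (Suc i) (Suc j) = d (Suc i) j - \<beta> (Suc i) j)
      \<and> \<bar>d (Suc i) (Suc j)\<bar> \<le> \<bar>d i (Suc j) + \<alpha> i (Suc j)\<bar>
      \<and> \<bar>d (Suc i) (Suc j)\<bar> \<le> \<bar>d (Suc i) j - \<beta> (Suc i) j\<bar>"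
begin

lemma transpose: "greedy_grid (\<lambda>j i. - d i j) (\<lambda>j i. \<beta> i j) (\<lambda>j i. \<alpha> i j) M nb na"
proof unfold_locales
  fix j i
  assume "j < nb" "i < na"
  with d_greedy[of i j] show "(- d (Suc i) (Suc j) = - d (Suc i) j + \<beta> (Suc i) j
      \<or> - d (Suc i) (Suc j) = - d i (Suc j) - \<alpha> i (Suc j))
    \<and> \<bar>- d (Suc i) (Suc j)\<bar> \<le> \<bar>- d (Suc i) j + \<beta> (Suc i) j\<bar>
    \<and> \<bar>- d (Suc i) (Suc j)\<bar> \<le> \<bar>- d i (Suc j) - \<alpha> i (Suc j)\<bar>"
    by (auto simp: abs_minus_commute)
qed (use \<alpha>_bounds \<beta>_bounds \<alpha>_last_column \<beta>_last_row grid_nonempty d_origin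
    d_first_column d_first_row in simp_all)

lemma M_nonneg: "0 \<le> M"
  using \<alpha>_bounds[of 0 0] by linarith

lemma first_row_nonpos: "j \<le> nb \<Longrightarrow> d 0 j \<le> 0"
proof (induction j)
  case (Suc j)
  then show ?case using d_first_row[of j] \<beta>_bounds(1)[of 0 j] by simp
qed (simp add: d_origin)

lemma no_opposite_excess: "i < na \<Longrightarrow> j < nb \<Longrightarrow> \<not> (M < d (Suc i) j \<and> d i (Suc j) < - M)"
proof (induction "i + j" arbitrary: i j rule: less_induct)
  case less
  txt \<open>Each of the two cells is reached either directly from \<open>(i,j)\<close> or from a cell on the
    previous anti-diagonal, where the induction hypothesis applies.\<close>
  obtain p' b' where p: "0 \<le> b'" "d (Suc i) j = d i j + \<alpha> i j \<or> (d (Suc i) j = p' - b'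
      \<and> \<bar>d (Suc i) j\<bar> \<le> \<bar>d i j + \<alpha> i j\<bar> \<and> \<not> (M < p' \<and> d i j < - M))"
  proof (cases j)
    case 0
    then show thesis using that d_first_column less.prems by auto
  next
    case (Suc j')
    then show thesis
      using that[of "\<beta> (Suc i) j'" "d (Suc i) j'"] d_greedy[of i j'] \<beta>_bounds less
      by fastforce
  qed
  obtain q' a' where q: "0 \<le> a'" "d i (Suc j) = d i j - \<beta> i j \<or> (d i (Suc j) = q' + a'
      \<and> \<bar>d i (Suc j)\<bar> \<le> \<bar>d i j - \<beta> i j\<bar> \<and> \<not> (M < d i j \<and> q' < - M))"
  proof (cases i)
    case 0
    then show thesis using that d_first_row less.prems by auto
  next
    case (Suc i')
    then show thesis
      using that[of "\<alpha> i' (Suc j)" "d i' (Suc j)"] d_greedy[of i' j] \<alpha>_bounds less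
      by fastforce
  qed
  show ?case
    using no_opposite_excess_step[OF \<alpha>_bounds \<beta>_bounds q(1) p(1) p(2) q(2)] .
qed

lemma last_column_le: "i \<le> na \<Longrightarrow> d i nb \<le> M"
proof (induction i)
  case 0
  then show ?case using first_row_nonpos[of nb] M_nonneg by simp
next
  case (Suc i)
  obtain nb' where nb: "nb = Suc nb'" using grid_nonempty(2) by (cases nb) auto
  have "\<not> (M < d (Suc i) nb' \<and> d i nb < - M)"
    using no_opposite_excess[of i nb'] Suc.prems nb by simp
  then show ?case
    using d_greedy[of i nb'] \<alpha>_last_column[of i] \<beta>_bounds(1)[of "Suc i" nb'] Suc nb by auto
qed

lemma corner_bound: "\<bar>d na nb\<bar> \<le> M"
proof -
  interpret transposed: greedy_grid "\<lambda>j i. - d i j" "\<lambda>j i. \<beta> i j" "\<lambda>j i. \<alpha> i j" M nb na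
    by (rule transpose)
  obtain na' nb' where n: "na = Suc na'" "nb = Suc nb'"
    using grid_nonempty by (cases na; cases nb) auto
  have "d na' nb \<le> M" "- M \<le> d na nb'"
    using last_column_le[of na'] transposed.last_column_le[of nb'] n by simp_all
  moreover have "\<not> (M < d na nb' \<and> d na' nb < - M)"
    using no_opposite_excess[of na' nb'] n by simp
  ultimately show ?thesis
    using d_greedy[of na' nb'] \<alpha>_last_column[of na'] \<beta>_last_row[of nb'] n by auto
qed

end

lemma xO_Suc_Suc_minimizes_abs_xgap:
  fixes la lb :: "bool list" and lam :: real and i j :: nat
  defines "X \<equiv> xO la lb lam i (Suc j) @ [Inl i]" and "Y \<equiv> xO la lb lam (Suc i) j @ [Inr j]"
  assumes "i < length la" "j < length lb"
    and "0 < npos la" "0 < nneg la" "0 < npos lb" "0 < nneg lb"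
    and "real (npos la * nneg lb * npos lb * nneg la) < lam"
  shows "\<bar>xgap la lb (xO la lb lam (Suc i) (Suc j))\<bar> \<le> \<bar>xgap la lb X\<bar>"
    and "\<bar>xgap la lb (xO la lb lam (Suc i) (Suc j))\<bar> \<le> \<bar>xgap la lb Y\<bar>"
proof -
  let ?N = "real (npos la * nneg lb * npos lb * nneg la)"
  have "cnt_a X \<le> length la" "cnt_b X \<le> length lb" "cnt_a Y \<le> length la" "cnt_b Y \<le> length lb"
    using assms(3,4) xO_invariants by (simp_all add: X_def Y_def)
  then obtain cX cY where
    cX: "cX \<in> {0..1}" "G_hat la lb lam X = cX - lam * \<bar>xgap la lb X\<bar>" and
    cY: "cY \<in> {0..1}" "G_hat la lb lam Y = cY - lam * \<bar>xgap la lb Y\<bar>"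
    using G_hat_eq_penalized_xgap by (metis atLeastAtMost_iff)
  have ge: "\<bar>xgap la lb P\<bar> \<le> \<bar>xgap la lb Q\<bar>"
    if "G_hat la lb lam P \<ge> G_hat la lb lam Q" "P \<in> {X, Y}" "Q \<in> {X, Y}" for P Q
    using abs_le_if_penalized_ge[of _ _ ?N, OF _ _ xgap_scaled_in_Ints xgap_scaled_in_Ints]
      that cX cY assms(5-9) by auto
  have "xO la lb lam (Suc i) (Suc j) = (if G_hat la lb lam X > G_hat la lb lam Y then X else Y)"
    by (simp add: X_def Y_def)
  then show "\<bar>xgap la lb (xO la lb lam (Suc i) (Suc j))\<bar> \<le> \<bar>xgap la lb X\<bar>"
    and "\<bar>xgap la lb (xO la lb lam (Suc i) (Suc j))\<bar> \<le> \<bar>xgap la lb Y\<bar>"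
    using ge[of X Y] ge[of Y X] by auto
qed

lemma xO_greedy_grid:
  fixes la lb :: "bool list" and lam :: real
  assumes pos: "0 < npos la" "0 < nneg la" "0 < npos lb" "0 < nneg lb"
    and lam: "real (npos la * nneg lb * npos lb * nneg la) < lam"
  shows "greedy_grid (\<lambda>i j. xgap la lb (xO la lb lam i j))
    (\<lambda>i j. A_part la lb (xO la lb lam i j @ [Inl i]) - A_part la lb (xO la lb lam i j))
    (\<lambda>i j. B_part la lb (xO la lb lam i j @ [Inr j]) - B_part la lb (xO la lb lam i j))
    (max (1 / npos la) (1 / npos lb)) (length la) (length lb)"
proof -
  let ?O = "xO la lb lam"
  define d where "d i j = xgap la lb (?O i j)" for i j
  define \<alpha> where "\<alpha> i j = A_part la lb (?O i j @ [Inl i]) - A_part la lb (?O i j)" for i j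
  define \<beta> where "\<beta> i j = B_part la lb (?O i j @ [Inr j]) - B_part la lb (?O i j)" for i j
  have inv: "cnt_a (?O i j) = i" "cnt_b (?O i j) = j" "well_indexed (?O i j)" for i j
    using xO_invariants by simp_all
  have a_step: "xgap la lb (?O i j @ [Inl i]) = d i j + \<alpha> i j" if "i < length la" for i j
    using B_part_append_next_Inl[of "?O i j" la lb] that by (simp add: inv xgap_def d_def \<alpha>_def)
  have b_step: "xgap la lb (?O i j @ [Inr j]) = d i j - \<beta> i j" if "j < length lb" for i j
    using A_part_append_next_Inr[of "?O i j" lb la] that by (simp add: inv xgap_def d_def \<beta>_def)
  have nonempty: "0 < length l" if "0 < npos l" for l :: "bool list"
    using that length_filter_le[of "\<lambda>y. y" l] unfolding npos_def by linarith
  have "greedy_grid d \<alpha> \<beta> (max (1 / npos la) (1 / npos lb)) (length la) (length lb)"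
  proof unfold_locales
    fix i j
    show "0 \<le> \<alpha> i j" "\<alpha> i j \<le> max (1 / npos la) (1 / npos lb)"
      "0 \<le> \<beta> i j" "\<beta> i j \<le> max (1 / npos la) (1 / npos lb)"
      using A_part_append_next_Inl[of la lb "?O i j"] B_part_append_next_Inr[of la lb "?O i j"]
      by (simp_all add: inv \<alpha>_def \<beta>_def)
    show "\<alpha> i (length lb) = 0"
      using A_part_append_last_Inl[of "?O i (length lb)" lb la] by (simp add: inv \<alpha>_def)
    show "\<beta> (length la) j = 0"
      using B_part_append_last_Inr[of "?O (length la) j" la lb] by (simp add: inv \<beta>_def)
    show "0 < length la" "0 < length lb"
      using pos nonempty by simp_all
    show "d 0 0 = 0"
      by (simp add: d_def xgap_def)
    show "d (Suc i) 0 = d i 0 + \<alpha> i 0" if "i < length la"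
      using a_step[OF that, of 0] by (simp add: d_def xO_0)
    show "d 0 (Suc j) = d 0 j - \<beta> 0 j" if "j < length lb"
      using b_step[OF that, of 0] by (simp add: d_def)
  next
    fix i j
    assume ij: "i < length la" "j < length lb"
    have "?O (Suc i) (Suc j) = ?O i (Suc j) @ [Inl i] \<or> ?O (Suc i) (Suc j) = ?O (Suc i) j @ [Inr j]"
      by simp
    then show "(d (Suc i) (Suc j) = d i (Suc j) + \<alpha> i (Suc j)
        \<or> d (Suc i) (Suc j) = d (Suc i) j - \<beta> (Suc i) j)
      \<and> \<bar>d (Suc i) (Suc j)\<bar> \<le> \<bar>d i (Suc j) + \<alpha> i (Suc j)\<bar>
      \<and> \<bar>d (Suc i) (Suc j)\<bar> \<le> \<bar>d (Suc i) j - \<beta> (Suc i) j\<bar>"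
      using xO_Suc_Suc_minimizes_abs_xgap[OF ij pos lam] a_step[OF ij(1)] b_step[OF ij(2)]
      by (auto simp: d_def)
  qed
  then show ?thesis
    by (simp add: d_def[abs_def] \<alpha>_def[abs_def] \<beta>_def[abs_def])
qed

theorem theorem1:
  fixes la lb :: "bool list"
  assumes "npos la \<ge> 1" and "nneg la \<ge> 1" and "npos lb \<ge> 1" and "nneg lb \<ge> 1"
  shows "\<exists>lam0 :: real. lam0 \<ge> 0 \<and> (\<forall>lam \<ge> lam0.
           delta_xAUC la lb (xOrder la lb lam)
             \<le> max (1 / real (npos la)) (1 / real (npos lb)))"
proof (intro exI conjI allI impI)
  let ?N = "real (npos la * nneg lb * npos lb * nneg la)"
  show "0 \<le> ?N + 1"
    by simp
  fix lam :: real
  assume "?N + 1 \<le> lam"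
  then interpret greedy_grid "\<lambda>i j. xgap la lb (xO la lb lam i j)"
    "\<lambda>i j. A_part la lb (xO la lb lam i j @ [Inl i]) - A_part la lb (xO la lb lam i j)"
    "\<lambda>i j. B_part la lb (xO la lb lam i j @ [Inr j]) - B_part la lb (xO la lb lam i j)"
    "max (1 / npos la) (1 / npos lb)" "length la" "length lb"
    using assms by (intro xO_greedy_grid) simp_all
  have "delta_xAUC la lb (xOrder la lb lam) = \<bar>xgap la lb (xO la lb lam (length la) (length lb))\<bar>"
    unfolding xOrder_def by (rule delta_xAUC_eq_abs_xgap) (simp_all add: xO_invariants)
  with corner_bound show "delta_xAUC la lb (xOrder la lb lam) \<le> max (1 / npos la) (1 / npos lb)"
    by simp
qed

end
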